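(* Assume $f<\frac{n}{3}$ and that the protocol satisfies the following requirement (R). Let $v_p$ be any validator that is honest at the time it sends a PROPOSE message for chain $\chi_p$ in a slot $t$ with $4\Delta t\ge\max(\mathsf{GST},\mathsf{GAT})+4\Delta$. Then chain $\chi_p$ is justified at slot $t+1$ (i.e., the checkpoint $(\chi_p,t+1)$ becomes justified), and finalized at slot $t+2$. In particular, for every validator $v_i\in H_{4\Delta(t+2)+2\Delta}$, $\chi_p\preceq\chi^{\mathrm{fin},4\Delta(t+2)+2\Delta}_i$ and $\mathsf{txpool}^{4\Delta t}\subseteq\chi^{\mathrm{fin},4\Delta(t+2)+2\Delta}_i$. Requirement (R): (R1) In any slot $t'$, if an always-honest validator $v_i$ casts an FFG-vote $\mathcal{S}_i\to\mathcal{T}_i$ during round $r$, then (a) the vote is valid; (b) there is a set of messages $\mathcal{V}^{\mathsf{FFGvote},t'}_i\subseteq\mathcal{V}^r_i$ with $\mathcal{S}_i=\mathrm{GJ}(\mathcal{V}^{\mathsf{FFGvote},t'}_i)$; (c) $\mathcal{T}_i.c=t'$. (R2) If a PROPOSE message for chain $\chi_p$ is sent in round $4\Delta t\ge\max(\mathsf{GST},\mathsf{GAT})+\Delta$ by a proposer honest in that round, then: (a) $\chi_p$ includes all transactions in $\mathsf{txpool}^{4\Delta t}$; (b) in slot $t$, all always-honest validators cast valid FFG-votes with the same source checkpoint $\mathcal{S}$ and targets $\mathcal{T}_i$ with $\mathcal{T}_i.\chi\preceq\chi_p$; (c) in slot $t+1$: for every always-honest $v_i$, $\mathcal{V}^{\mathsf{FFGvote},t+1}_i$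 contains $\mathcal{V}^{\mathsf{FFGvote},t}_j$ for every always-honest $v_j$ and all FFG-votes sent by always-honest validators in slot $t$; and every always-honest $v_i$ sends an FFG-vote $\mathcal{S}_i\to\mathcal{T}_i$ with $\mathcal{T}_i.\chi=\chi_p$; (d) in slot $t+2$: for every always-honest $v_i$, $\mathcal{V}^{\mathsf{FFGvote},t+2}_i$ contains $\mathcal{V}^{\mathsf{FFGvote},t+1}_j$ for every always-honest $v_j$ and all FFG-votes sent by always-honest validators in slot $t+1$; and for every validator $v_i$ honest in round $r^*=4\Delta(t+2)+2\Delta$, (i) $\mathcal{V}^{r^*}_i$ contains all FFG-votes cast by always-honest validators in slot $t+2$ and (ii) $\chi^{\mathrm{fin},r^*}_i=\max\{\chi:\chi\preceq\mathrm{GF}(\mathcal{V}^{r^*}_i).\chi\ \wedge\ \chi.p\le\chi_p.p\}$.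
   Context: There are $n$ validators, at most $f$ of which are ever corrupted by an adaptive adversary; a validator is always-honest if it is never corrupted. Time is divided into rounds; slot $t$ consists of rounds $[4\Delta t,4\Delta(t+1))$ and proposals for slot $t$ are made at round $4\Delta t$. The network is partially synchronous: after an unknown time $\mathsf{GST}$, messages are delivered within $\Delta$ rounds; after an unknown time $\mathsf{GAT}$, all validators are always awake. $H_r$ denotes the set of honest validators active (awake and having completed joining) at round $r$. $\mathcal{V}^r_i$ is the view (set of messages received) of $v_i$ at round $r$; $\chi^{\mathrm{fin},r}_i$ is the finalized chain output by $v_i$ at round $r$; $\mathsf{txpool}^r$ is the (ever-growing) set of transactions available at round $r$, and a transaction is in a chain if it is in one of its blocks. Blocks $(b,p)$, chains identified with their last block, $\chi.p$ = slot of the last block, $\preceq$ = prefix. Checkpoints $\mathcal{C}=(\chi,c)$; FFG-vote $\mathcal{C}_1\to\mathcal{C}_2$ valid iff $\mathcal{C}_1.c<\mathcal{C}_2.c$ and $\mathcal{C}_1.\chi\preceq\mathcal{C}_2.\chi$. In a view $\mathcal{V}$: $\mathcal{C}$ is justified iff $\mathcal{C}=(B_{\text{genesis}},0)$ or there are votes in $\mathcal{V}$ from at least $\frac{2}{3}n$ distinct validators with valid FFG-votes $\mathcal{S}\to\mathcal{T}$, $\mathcal{S}$ justified in $\mathcal{V}$, $\mathcal{S}.\chi\preceq\mathcal{C}.\chi\preceq\mathcal{T}.\chi$, $\mathcal{T}.c=\mathcal{C}.c$; $\mathcal{C}$ is finalized iff $\mathcal{C}=(B_{\text{genesis}},0)$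 or $\mathcal{C}$ is justified and there are votes in $\mathcal{V}$ from at least $\frac{2}{3}n$ distinct validators with valid FFG-votes $\mathcal{C}\to\mathcal{T}$, $\mathcal{T}.c=\mathcal{C}.c+1$. Checkpoints are preordered by $\mathcal{C}\le\mathcal{C}'$ iff $\mathcal{C}.c<\mathcal{C}'.c$ or ($\mathcal{C}.c=\mathcal{C}'.c$ and $\mathcal{C}.\chi.p\le\mathcal{C}'.\chi.p$). $\mathrm{GJ}(\mathcal{V})$ (resp. $\mathrm{GF}(\mathcal{V})$) is a maximal justified (resp. finalized) checkpoint in $\mathcal{V}$ for this preorder, ties broken arbitrarily. A chain $\chi$ is justified (finalized) if $\chi=\mathcal{C}.\chi$ for a justified (finalized) checkpoint $\mathcal{C}$. *)

theory Defs
  imports Main "HOL-Library.Sublist"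
begin

text \<open>A block is a pair (b, p): its content b (the set of transactions it contains)
  and its slot p.  A chain is the sequence of blocks from the genesis block to its
  last block (so a chain is identified with its last block); slots strictly
  increase along a chain.\<close>

type_synonym 'tx block = "'tx set \<times> nat"

definition genesis_block :: "'tx block" where
  "genesis_block = ({}, 0)"

typedef 'tx chain =
  "{xs :: 'tx block list. xs \<noteq> [] \<and> hd xs = genesis_block \<and>
      sorted_wrt (\<lambda>a b. snd a < snd b) xs}"
  by (rule exI[of _ "[genesis_block]"]) simp

definition genesis_chain :: "'tx chain" where
  "genesis_chain = Abs_chain [genesis_block]"

definition chain_prefix :: "'tx chain \<Rightarrow> 'tx chain \<Rightarrow> bool" where
  "chain_prefix c1 c2 \<longleftrightarrow> prefix (Rep_chain c1) (Rep_chain c2)"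

definition chain_slot :: "'tx chain \<Rightarrow> nat" where
  "chain_slot c = snd (last (Rep_chain c))"

definition tx_in_chain :: "'tx \<Rightarrow> 'tx chain \<Rightarrow> bool" where
  "tx_in_chain tx c \<longleftrightarrow> (\<exists>b \<in> set (Rep_chain c). tx \<in> fst b)"

type_synonym 'tx checkpoint = "'tx chain \<times> nat"

definition valid_ffg :: "'tx checkpoint \<Rightarrow> 'tx checkpoint \<Rightarrow> bool" where
  "valid_ffg S T \<longleftrightarrow> snd S < snd T \<and> chain_prefix (fst S) (fst T)"

datatype ('v, 'tx) msg =
    FFGVote 'v "'tx checkpoint" "'tx checkpoint"
  | Propose 'v "'tx chain"

text \<open>Justification in a view; n = CARD('v) is the number of validators.\<close>
inductive justified :: "('v::finite, 'tx) msg set \<Rightarrow> 'tx checkpoint \<Rightarrow> bool"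
  for V :: "('v, 'tx) msg set" where
  genesis: "justified V (genesis_chain, 0)"
| votes: "\<lbrakk> 3 * card W \<ge> 2 * card (UNIV :: 'v set);
           \<forall>v\<in>W. \<exists>S T. FFGVote v S T \<in> V \<and> valid_ffg S T \<and> justified V S \<and>
                  chain_prefix (fst S) (fst C) \<and> chain_prefix (fst C) (fst T) \<and>
                  snd T = snd C \<rbrakk>
          \<Longrightarrow> justified V C"

definition finalized :: "('v::finite, 'tx) msg set \<Rightarrow> 'tx checkpoint \<Rightarrow> bool" where
  "finalized V C \<longleftrightarrow> C = (genesis_chain, 0) \<or>
     (justified V C \<and>
      (\<exists>W :: 'v set. 3 * card W \<ge> 2 * card (UNIV :: 'v set) \<and>
         (\<forall>v\<in>W. \<exists>T. FFGVote v C T \<in> V \<and> valid_ffg C T \<and> snd T = snd C + 1)))"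

definition cp_le :: "'tx checkpoint \<Rightarrow> 'tx checkpoint \<Rightarrow> bool" where
  "cp_le C C' \<longleftrightarrow> snd C < snd C' \<or> (snd C = snd C' \<and> chain_slot (fst C) \<le> chain_slot (fst C'))"

text \<open>C is a possible value of GJ(V) (resp. GF(V)): a maximal justified (finalized)
  checkpoint; ties are broken arbitrarily, so any maximal one may be chosen.\<close>
definition is_GJ :: "('v::finite, 'tx) msg set \<Rightarrow> 'tx checkpoint \<Rightarrow> bool" where
  "is_GJ V C \<longleftrightarrow> justified V C \<and> (\<forall>C'. justified V C' \<longrightarrow> cp_le C' C)"

definition is_GF :: "('v::finite, 'tx) msg set \<Rightarrow> 'tx checkpoint \<Rightarrow> bool" where
  "is_GF V C \<longleftrightarrow> finalized V C \<and> (\<forall>C'. finalized V C' \<longrightarrow> cp_le C' C)"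

definition slot_of :: "nat \<Rightarrow> nat \<Rightarrow> nat" where
  "slot_of \<Delta> r = r div (4 * \<Delta>)"

definition always_honest :: "('v \<Rightarrow> nat \<Rightarrow> bool) \<Rightarrow> 'v \<Rightarrow> bool" where
  "always_honest honest i \<longleftrightarrow> (\<forall>r. honest i r)"

text \<open>H_r: honest validators that are active (awake and joined) at round r.\<close>
definition H :: "('v \<Rightarrow> nat \<Rightarrow> bool) \<Rightarrow> ('v \<Rightarrow> nat \<Rightarrow> bool) \<Rightarrow> nat \<Rightarrow> 'v set" where
  "H honest active r = {i. honest i r \<and> active i r}"

text \<open>cast i r: the FFG-votes (source, target) cast by validator i during round r.
  votes_in_slot: the FFG-votes cast by i during slot t.\<close>
definition votes_in_slot ::
  "nat \<Rightarrow> ('v \<Rightarrow> nat \<Rightarrow> ('tx checkpoint \<times> 'tx checkpoint) set) \<Rightarrow> 'v \<Rightarrow> nat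
     \<Rightarrow> ('tx checkpoint \<times> 'tx checkpoint) set" where
  "votes_in_slot \<Delta> cast i t = {ST. \<exists>r. slot_of \<Delta> r = t \<and> ST \<in> cast i r}"

text \<open>Requirement (R1). Vffg i t is the set V^{FFGvote,t}_i.\<close>
definition R1 ::
  "nat \<Rightarrow> ('v::finite \<Rightarrow> nat \<Rightarrow> bool) \<Rightarrow> ('v \<Rightarrow> nat \<Rightarrow> ('v, 'tx) msg set)
   \<Rightarrow> ('v \<Rightarrow> nat \<Rightarrow> ('tx checkpoint \<times> 'tx checkpoint) set)
   \<Rightarrow> ('v \<Rightarrow> nat \<Rightarrow> ('v, 'tx) msg set) \<Rightarrow> bool" where
  "R1 \<Delta> honest V cast Vffg \<longleftrightarrow>
     (\<forall>t' i r S T. always_honest honest i \<and> slot_of \<Delta> r = t' \<and> (S, T) \<in> cast i r \<longrightarrow>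
        valid_ffg S T \<and> Vffg i t' \<subseteq> V i r \<and> is_GJ (Vffg i t') S \<and> snd T = t')"

text \<open>The part of (R2) concerning slot t' + 1 following slot t'.\<close>
definition next_slot_views ::
  "nat \<Rightarrow> ('v \<Rightarrow> nat \<Rightarrow> bool) \<Rightarrow> ('v \<Rightarrow> nat \<Rightarrow> ('tx checkpoint \<times> 'tx checkpoint) set)
   \<Rightarrow> ('v \<Rightarrow> nat \<Rightarrow> ('v, 'tx) msg set) \<Rightarrow> nat \<Rightarrow> bool" where
  "next_slot_views \<Delta> honest cast Vffg t' \<longleftrightarrow>
     (\<forall>i. always_honest honest i \<longrightarrow>
        (\<forall>j. always_honest honest j \<longrightarrow> Vffg j t' \<subseteq> Vffg i (t' + 1)) \<and>
        (\<forall>j S T. always_honest honest j \<and> (S, T) \<in> votes_in_slot \<Delta> cast j t' \<longrightarrow>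
            FFGVote j S T \<in> Vffg i (t' + 1)))"

text \<open>Requirement (R2). proposes p r chi: validator p sends a PROPOSE message for
  chain chi in round r.\<close>
definition R2 ::
  "nat \<Rightarrow> nat \<Rightarrow> nat \<Rightarrow> ('v::finite \<Rightarrow> nat \<Rightarrow> bool) \<Rightarrow> ('v \<Rightarrow> nat \<Rightarrow> ('v, 'tx) msg set)
   \<Rightarrow> ('v \<Rightarrow> nat \<Rightarrow> ('tx checkpoint \<times> 'tx checkpoint) set)
   \<Rightarrow> ('v \<Rightarrow> nat \<Rightarrow> ('v, 'tx) msg set) \<Rightarrow> ('v \<Rightarrow> nat \<Rightarrow> 'tx chain)
   \<Rightarrow> (nat \<Rightarrow> 'tx set) \<Rightarrow> ('v \<Rightarrow> nat \<Rightarrow> 'tx chain \<Rightarrow> bool) \<Rightarrow> bool" where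
  "R2 \<Delta> GST GAT honest V cast Vffg fin txpool proposes \<longleftrightarrow>
     (\<forall>t p chi_p. 4 * \<Delta> * t \<ge> max GST GAT + \<Delta> \<and> honest p (4 * \<Delta> * t) \<and>
                 proposes p (4 * \<Delta> * t) chi_p \<longrightarrow>
        \<comment> \<open>(a)\<close>
        (\<forall>tx \<in> txpool (4 * \<Delta> * t). tx_in_chain tx chi_p) \<and>
        \<comment> \<open>(b)\<close>
        (\<exists>S. \<forall>i. always_honest honest i \<longrightarrow>
            (\<exists>T. (S, T) \<in> votes_in_slot \<Delta> cast i t \<and> valid_ffg S T \<and>
                 chain_prefix (fst T) chi_p)) \<and>
        \<comment> \<open>(c)\<close>
        next_slot_views \<Delta> honest cast Vffg t \<and>
        (\<forall>i. always_honest honest i \<longrightarrow>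
            (\<exists>S T. (S, T) \<in> votes_in_slot \<Delta> cast i (t + 1) \<and> fst T = chi_p)) \<and>
        \<comment> \<open>(d)\<close>
        next_slot_views \<Delta> honest cast Vffg (t + 1) \<and>
        (\<forall>i. honest i (4 * \<Delta> * (t + 2) + 2 * \<Delta>) \<longrightarrow>
           (let rs = 4 * \<Delta> * (t + 2) + 2 * \<Delta> in
             (\<forall>j S T. always_honest honest j \<and> (S, T) \<in> votes_in_slot \<Delta> cast j (t + 2) \<longrightarrow>
                 FFGVote j S T \<in> V i rs) \<and>
             (\<exists>C. is_GF (V i rs) C \<and>
                 chain_prefix (fin i rs) (fst C) \<and> chain_slot (fin i rs) \<le> chain_slot chi_p \<and>
                 (\<forall>chi. chain_prefix chi (fst C) \<and> chain_slot chi \<le> chain_slot chi_p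
                        \<longrightarrow> chain_prefix chi (fin i rs))))))"

end

theory Submission
  imports Defs
begin

text \<open>
  After GST and GAT the always-honest validators, a quorum, all vote in slots t+1 and t+2,
  and each of their views in slot t+2 contains all honest slot-(t+1) votes and the views
  these were based on.  In slot t+1 every honest vote targets chi_p, so (chi_p, t+1) is
  justified in every honest slot-(t+2) view.  Any justified checkpoint of epoch t+1 is backed
  by an honest vote, hence lies on chi_p; so (chi_p, t+1) is the greatest justified checkpoint
  there and becomes the source of all honest slot-(t+2) votes, which finalize it.  Finally,
  a finalized checkpoint seen at round 4\<Delta>(t+2)+2\<Delta> that is at least (chi_p, t+1) has
  epoch t+1 or t+2, and in both cases the honest vote backing it forces its chain to extend
  chi_p; the finalized chain output there is the longest prefix of that chain with slot at
  most chi_p.p, which is therefore chi_p or longer.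
\<close>

abbreviation quorum :: "'v::finite set \<Rightarrow> bool" where
  "quorum W \<equiv> 2 * card (UNIV :: 'v set) \<le> 3 * card W"

lemma quorum_Collect:
  assumes "3 * card {v::'v::finite. \<not> P v} < card (UNIV :: 'v set)"
  shows "quorum {v. P v}"
proof -
  have "card {v::'v. P v} + card {v. \<not> P v} = card (UNIV :: 'v set)"
    by (subst card_Un_disjoint[symmetric]) (auto intro: arg_cong[where f = card])
  then show ?thesis using assms by linarith
qed

lemma quorum_meets:
  assumes "quorum (W :: 'v::finite set)" "3 * card {v::'v. \<not> P v} < card (UNIV :: 'v set)"
  shows "\<exists>w\<in>W. P w"
proof (rule ccontr)
  assume "\<not> (\<exists>w\<in>W. P w)"
  then have "card W \<le> card {v. \<not> P v}" by (intro card_mono) auto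
  with assms show False by linarith
qed

lemma chain_prefix_refl [simp]: "chain_prefix c c"
  by (simp add: chain_prefix_def)

lemma chain_prefix_slot_le_imp_eq:
  assumes "chain_prefix a b" "chain_slot b \<le> chain_slot a"
  shows "a = b"
proof -
  obtain zs where b: "Rep_chain b = Rep_chain a @ zs"
    using assms(1) unfolding chain_prefix_def prefix_def by blast
  have "zs = []"
  proof (rule ccontr)
    assume "zs \<noteq> []"
    moreover have "Rep_chain a \<noteq> []" "sorted_wrt (\<lambda>x y. snd x < snd y) (Rep_chain b)"
      using Rep_chain[of a] Rep_chain[of b] by auto
    ultimately have "chain_slot a < chain_slot b"
      unfolding chain_slot_def b by (simp add: sorted_wrt_append)
    with assms(2) show False by simp
  qed
  with b show ?thesis by (simp add: Rep_chain_inject)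
qed

lemma tx_in_chain_prefix: "tx_in_chain tx a \<Longrightarrow> chain_prefix a b \<Longrightarrow> tx_in_chain tx b"
  unfolding tx_in_chain_def chain_prefix_def using set_mono_prefix by blast

lemma justified_mono:
  assumes "justified U C" "U \<subseteq> U'"
  shows "justified U' C"
  using assms
proof (induction rule: justified.induct)
  case genesis
  show ?case by (rule justified.genesis)
next
  case (votes W C)
  then show ?case by (intro justified.votes[of W]) blast+
qed

lemma justified_if_quorum_votes_for:
  assumes "quorum W"
    and "\<And>w. w \<in> W \<Longrightarrow> \<exists>S. FFGVote w S C \<in> U \<and> valid_ffg S C \<and> justified U S"
  shows "justified U C"
  using assms by (intro justified.votes[of W]) (fastforce simp: valid_ffg_def)+

lemma slot_of_mono: "r \<le> r' \<Longrightarrow> slot_of \<Delta> r \<le> slot_of \<Delta> r'"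
  unfolding slot_of_def by (rule div_le_mono)

lemma slot_of_mid_slot: "0 < \<Delta> \<Longrightarrow> slot_of \<Delta> (4 * \<Delta> * s + 2 * \<Delta>) = s"
  unfolding slot_of_def by (simp add: div_add1_eq)

lemma round_lt_next_slot: "0 < \<Delta> \<Longrightarrow> r < 4 * \<Delta> * (slot_of \<Delta> r + 1)"
  unfolding slot_of_def by (simp add: dividend_less_times_div)

locale ffg_execution =
  fixes \<Delta> GST :: nat
    and honest active :: "'v::finite \<Rightarrow> nat \<Rightarrow> bool"
    and V :: "'v \<Rightarrow> nat \<Rightarrow> ('v, 'tx) msg set"
    and cast :: "'v \<Rightarrow> nat \<Rightarrow> ('tx checkpoint \<times> 'tx checkpoint) set"
    and Vffg :: "'v \<Rightarrow> nat \<Rightarrow> ('v, 'tx) msg set"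
  assumes Delta_pos: "0 < \<Delta>"
    and few_corrupt: "3 * card {i. \<not> always_honest honest i} < card (UNIV :: 'v set)"
    and vote_at_most_once:
      "\<And>i s a b. always_honest honest i \<Longrightarrow> a \<in> votes_in_slot \<Delta> cast i s
          \<Longrightarrow> b \<in> votes_in_slot \<Delta> cast i s \<Longrightarrow> a = b"
    and authentic:
      "\<And>i j r S T. always_honest honest i \<Longrightarrow> FFGVote i S T \<in> V j r
          \<Longrightarrow> \<exists>r' \<le> r. (S, T) \<in> cast i r'"
    and delivery_votes:
      "\<And>i j r r' S T. honest i r \<Longrightarrow> (S, T) \<in> cast i r \<Longrightarrow> j \<in> H honest active r'
          \<Longrightarrow> r' \<ge> max r GST + \<Delta> \<Longrightarrow> FFGVote i S T \<in> V j r'"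
    and delivery_views:
      "\<And>i j r r'. honest i r \<Longrightarrow> j \<in> H honest active r'
          \<Longrightarrow> r' \<ge> max r GST + \<Delta> \<Longrightarrow> V i r \<subseteq> V j r'"
    and R1: "R1 \<Delta> honest V cast Vffg"
begin

lemma honest_quorum: "quorum {i. always_honest honest i}"
  using few_corrupt by (rule quorum_Collect)

lemma honest_vote_R1:
  assumes "always_honest honest i" "(S, T) \<in> cast i r"
  shows "valid_ffg S T" and "Vffg i (slot_of \<Delta> r) \<subseteq> V i r"
    and "is_GJ (Vffg i (slot_of \<Delta> r)) S" and "snd T = slot_of \<Delta> r"
  using R1 assms unfolding R1_def by blast+

lemma seen_honest_vote_in_target_slot:
  assumes "always_honest honest w" "FFGVote w S T \<in> V j r"
  shows "(S, T) \<in> votes_in_slot \<Delta> cast w (snd T)" and "snd T \<le> slot_of \<Delta> r"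
proof -
  obtain r' where "r' \<le> r" "(S, T) \<in> cast w r'"
    using authentic[OF assms] by blast
  with honest_vote_R1(4)[OF assms(1)] show "(S, T) \<in> votes_in_slot \<Delta> cast w (snd T)"
    and "snd T \<le> slot_of \<Delta> r"
    by (auto simp: votes_in_slot_def slot_of_mono)
qed

lemma justified_has_honest_vote:
  assumes "justified U C" "snd C \<noteq> 0"
  obtains w S T where "always_honest honest w" "FFGVote w S T \<in> U"
    "chain_prefix (fst S) (fst C)" "chain_prefix (fst C) (fst T)" "snd T = snd C"
  using assms(1)
proof (cases rule: justified.cases)
  case genesis
  with assms(2) show ?thesis by simp
next
  case (votes W)
  then obtain w where "w \<in> W" "always_honest honest w"
    using quorum_meets few_corrupt by blast
  with votes that show ?thesis by blast
qed

lemma honest_slot_vote_delivered: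
  assumes "always_honest honest w" "(S, T) \<in> votes_in_slot \<Delta> cast w s"
    and "j \<in> H honest active r" "GST + \<Delta> \<le> r" "4 * \<Delta> * (s + 1) + \<Delta> \<le> r"
  shows "FFGVote w S T \<in> V j r" and "Vffg w s \<subseteq> V j r"
proof -
  obtain r' where r': "slot_of \<Delta> r' = s" "(S, T) \<in> cast w r'"
    using assms(2) unfolding votes_in_slot_def by blast
  have "r' < 4 * \<Delta> * (s + 1)"
    using round_lt_next_slot[OF Delta_pos, of r'] r'(1) by simp
  with assms(4,5) have late: "max r' GST + \<Delta> \<le> r" by simp
  have "honest w r'" using assms(1) unfolding always_honest_def by simp
  with r' late assms(3) show "FFGVote w S T \<in> V j r" and "Vffg w s \<subseteq> V j r"
    using delivery_votes delivery_views honest_vote_R1(2)[OF assms(1) r'(2)] by blast+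
qed

end

locale timely_proposal = ffg_execution +
  fixes t :: nat and chi_p :: "'tx chain"
  assumes proposal_targeted:
      "\<And>i. always_honest honest i \<Longrightarrow>
          \<exists>S T. (S, T) \<in> votes_in_slot \<Delta> cast i (t + 1) \<and> fst T = chi_p"
    and views_after_proposal: "next_slot_views \<Delta> honest cast Vffg (t + 1)"
    and honest_vote_slot_succ_succ:
      "\<And>i. always_honest honest i \<Longrightarrow> votes_in_slot \<Delta> cast i (t + 2) \<noteq> {}"
begin

lemma honest_target_slot_succ:
  assumes "always_honest honest w" "(S, T) \<in> votes_in_slot \<Delta> cast w (t + 1)"
  shows "fst T = chi_p"
  using proposal_targeted[OF assms(1)] vote_at_most_once[OF assms] by blast

lemma justified_proposal_if_votes_seen:
  assumes votes_seen:
      "\<And>w S T. always_honest honest w \<Longrightarrow> (S, T) \<in> votes_in_slot \<Delta> cast w (t + 1)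
          \<Longrightarrow> FFGVote w S T \<in> U \<and> Vffg w (t + 1) \<subseteq> U"
  shows "justified U (chi_p, t + 1)"
proof (rule justified_if_quorum_votes_for[OF honest_quorum])
  fix w assume "w \<in> {i. always_honest honest i}"
  then have w: "always_honest honest w" by simp
  obtain S T where vote: "(S, T) \<in> votes_in_slot \<Delta> cast w (t + 1)" and "fst T = chi_p"
    using proposal_targeted[OF w] by blast
  then obtain r where r: "slot_of \<Delta> r = t + 1" "(S, T) \<in> cast w r"
    unfolding votes_in_slot_def by blast
  with honest_vote_R1[OF w r(2)] \<open>fst T = chi_p\<close> have "T = (chi_p, t + 1)" "valid_ffg S T"
    by (auto simp: prod_eq_iff)
  moreover have "justified U S"
    using honest_vote_R1(3)[OF w r(2)] votes_seen[OF w vote] r(1)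
    by (auto simp: is_GJ_def intro: justified_mono)
  ultimately show "\<exists>S. FFGVote w S (chi_p, t + 1) \<in> U \<and> valid_ffg S (chi_p, t + 1) \<and> justified U S"
    using votes_seen[OF w vote] by blast
qed

lemma justified_proposal_in_vote_view:
  assumes "always_honest honest v"
  shows "justified (Vffg v (t + 2)) (chi_p, t + 1)"
  using views_after_proposal assms
  by (intro justified_proposal_if_votes_seen) (auto simp: next_slot_views_def)

lemma justified_slot_succ_is_proposal:
  assumes "justified U C" "U \<subseteq> V j r" "snd C = t + 1"
    and "chain_slot chi_p \<le> chain_slot (fst C)"
  shows "fst C = chi_p"
proof -
  have "snd C \<noteq> 0" using assms(3) by simp
  then obtain w S T where w: "always_honest honest w" "FFGVote w S T \<in> U"
    and "chain_prefix (fst C) (fst T)" "snd T = snd C"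
    using justified_has_honest_vote[OF assms(1)] by blast
  moreover have "FFGVote w S T \<in> V j r"
    using w(2) assms(2) by blast
  then have "(S, T) \<in> votes_in_slot \<Delta> cast w (snd T)"
    by (rule seen_honest_vote_in_target_slot(1)[OF w(1)])
  then have "fst T = chi_p"
    using honest_target_slot_succ[OF w(1)] assms(3) \<open>snd T = snd C\<close> by simp
  ultimately show ?thesis
    using assms(4) chain_prefix_slot_le_imp_eq by auto
qed

lemma honest_source_slot_succ_succ:
  assumes "always_honest honest v" "(S, T) \<in> votes_in_slot \<Delta> cast v (t + 2)"
  shows "S = (chi_p, t + 1)"
proof -
  obtain r where r: "slot_of \<Delta> r = t + 2" "(S, T) \<in> cast v r"
    using assms(2) unfolding votes_in_slot_def by blast
  note R1 = honest_vote_R1[OF assms(1) r(2), unfolded r(1)]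
  have "cp_le (chi_p, t + 1) S"
    using R1(3) justified_proposal_in_vote_view[OF assms(1)] unfolding is_GJ_def by blast
  moreover have "snd S < t + 2"
    using R1(1,4) unfolding valid_ffg_def by simp
  ultimately have "snd S = t + 1" "chain_slot chi_p \<le> chain_slot (fst S)"
    unfolding cp_le_def by auto
  moreover have "fst S = chi_p"
    using R1(2,3) calculation unfolding is_GJ_def
    by (blast intro: justified_slot_succ_is_proposal)
  ultimately show ?thesis by (simp add: prod_eq_iff)
qed

lemma finalized_proposal_if_votes_seen:
  assumes "justified U (chi_p, t + 1)"
    and votes_seen:
      "\<And>w S T. always_honest honest w \<Longrightarrow> (S, T) \<in> votes_in_slot \<Delta> cast w (t + 2)
          \<Longrightarrow> FFGVote w S T \<in> U"
  shows "finalized U (chi_p, t + 1)"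
  unfolding finalized_def
proof (intro disjI2 conjI exI[of _ "{i. always_honest honest i}"] honest_quorum ballI assms(1))
  fix w assume "w \<in> {i. always_honest honest i}"
  then have w: "always_honest honest w" by simp
  obtain S T where vote: "(S, T) \<in> votes_in_slot \<Delta> cast w (t + 2)"
    using honest_vote_slot_succ_succ[OF w] by fast
  then obtain r where r: "slot_of \<Delta> r = t + 2" "(S, T) \<in> cast w r"
    unfolding votes_in_slot_def by blast
  have "S = (chi_p, t + 1)"
    using honest_source_slot_succ_succ[OF w vote] .
  with honest_vote_R1[OF w r(2)] r(1) votes_seen[OF w vote]
  show "\<exists>T. FFGVote w (chi_p, t + 1) T \<in> U \<and> valid_ffg (chi_p, t + 1) T
      \<and> snd T = snd (chi_p, t + 1) + 1"
    by (intro exI[of _ T]) auto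
qed

lemma greatest_finalized_extends_proposal:
  assumes "is_GF (V j r) C" "finalized (V j r) (chi_p, t + 1)" "slot_of \<Delta> r \<le> t + 2"
  shows "chain_prefix chi_p (fst C)"
proof -
  have le: "cp_le (chi_p, t + 1) C"
    using assms(1,2) unfolding is_GF_def by blast
  then have "t + 1 \<le> snd C"
    unfolding cp_le_def by auto
  then have "justified (V j r) C" "snd C \<noteq> 0"
    using assms(1) unfolding is_GF_def finalized_def by auto
  then obtain w S T where w: "always_honest honest w" "FFGVote w S T \<in> V j r"
    and "chain_prefix (fst S) (fst C)" "chain_prefix (fst C) (fst T)" "snd T = snd C"
    by (rule justified_has_honest_vote)
  moreover have vote: "(S, T) \<in> votes_in_slot \<Delta> cast w (snd T)" "snd T \<le> t + 2"
    using seen_honest_vote_in_target_slot[OF w] assms(3) by fastforce+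
  ultimately consider "snd C = t + 1" | "snd C = t + 2"
    using \<open>t + 1 \<le> snd C\<close> by linarith
  then show ?thesis
  proof cases
    case 1
    with le have "chain_slot chi_p \<le> chain_slot (fst C)"
      unfolding cp_le_def by simp
    with 1 show ?thesis
      using justified_slot_succ_is_proposal \<open>justified (V j r) C\<close> by fastforce
  next
    case 2
    then have "S = (chi_p, t + 1)"
      using honest_source_slot_succ_succ w vote \<open>snd T = snd C\<close> by simp
    with \<open>chain_prefix (fst S) (fst C)\<close> show ?thesis by simp
  qed
qed

lemma proposal_finalized_in_late_view:
  assumes j: "j \<in> H honest active r" and "GST + \<Delta> \<le> r" "4 * \<Delta> * (t + 2) + \<Delta> \<le> r"
    and "slot_of \<Delta> r \<le> t + 2"
    and votes_seen: "\<And>w S T. always_honest honest w \<Longrightarrow>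
        (S, T) \<in> votes_in_slot \<Delta> cast w (t + 2) \<Longrightarrow> FFGVote w S T \<in> V j r"
    and GF: "is_GF (V j r) C"
  shows "justified (V j r) (chi_p, t + 1)" and "finalized (V j r) (chi_p, t + 1)"
    and "chain_prefix chi_p (fst C)"
proof -
  show just: "justified (V j r) (chi_p, t + 1)"
    using assms(2,3) honest_slot_vote_delivered[OF _ _ j]
    by (intro justified_proposal_if_votes_seen) (simp add: algebra_simps)
  show finz: "finalized (V j r) (chi_p, t + 1)"
    using just votes_seen by (rule finalized_proposal_if_votes_seen)
  show "chain_prefix chi_p (fst C)"
    using GF finz assms(4) by (rule greatest_finalized_extends_proposal)
qed
end

lemma (in ffg_execution) timely_proposal_if_R2:
  assumes R2: "R2 \<Delta> GST GAT honest V cast Vffg fin txpool proposes"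
    and late: "max GST GAT + \<Delta> \<le> 4 * \<Delta> * t"
    and "honest p (4 * \<Delta> * t)" "proposes p (4 * \<Delta> * t) chi_p"
    and vote_after_GAT:
      "\<And>i s. always_honest honest i \<Longrightarrow> GAT \<le> 4 * \<Delta> * s \<Longrightarrow> votes_in_slot \<Delta> cast i s \<noteq> {}"
  shows "timely_proposal \<Delta> GST honest active V cast Vffg t chi_p"
proof -
  note R2_at = R2[unfolded R2_def, rule_format, OF conjI[OF late conjI[OF assms(3,4)]]]
  show ?thesis
  proof unfold_locales
    show "\<exists>S T. (S, T) \<in> votes_in_slot \<Delta> cast i (t + 1) \<and> fst T = chi_p"
      if "always_honest honest i" for i
      using R2_at that by simp
    show "next_slot_views \<Delta> honest cast Vffg (t + 1)"
      using R2_at by simp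
    show "votes_in_slot \<Delta> cast i (t + 2) \<noteq> {}" if "always_honest honest i" for i
      using vote_after_GAT[OF that] late by (simp add: algebra_simps)
  qed
qed

theorem theorem4p5:
  fixes n f \<Delta> GST GAT :: nat
    and honest active :: "'v::finite \<Rightarrow> nat \<Rightarrow> bool"
    and V :: "'v \<Rightarrow> nat \<Rightarrow> ('v, 'tx) msg set"
    and cast :: "'v \<Rightarrow> nat \<Rightarrow> ('tx checkpoint \<times> 'tx checkpoint) set"
    and Vffg :: "'v \<Rightarrow> nat \<Rightarrow> ('v, 'tx) msg set"
    and fin :: "'v \<Rightarrow> nat \<Rightarrow> 'tx chain"
    and txpool :: "nat \<Rightarrow> 'tx set"
    and proposes :: "'v \<Rightarrow> nat \<Rightarrow> 'tx chain \<Rightarrow> bool"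
    and p :: 'v and chi_p :: "'tx chain" and t :: nat
  assumes n_def: "n = card (UNIV :: 'v set)"
    and f_bound: "3 * f < n"
    and corrupt_bound: "card {i. \<not> always_honest honest i} \<le> f"
    and Delta_pos: "\<Delta> > 0"
    and adaptive: "\<And>i r r'. honest i r \<Longrightarrow> r' \<le> r \<Longrightarrow> honest i r'"
    and txpool_mono: "\<And>r r'. r \<le> r' \<Longrightarrow> txpool r \<subseteq> txpool r'"
    and vote_at_most_once:
      "\<And>i t' a b. always_honest honest i \<Longrightarrow> a \<in> votes_in_slot \<Delta> cast i t'
          \<Longrightarrow> b \<in> votes_in_slot \<Delta> cast i t' \<Longrightarrow> a = b"
    and vote_after_GAT:
      "\<And>i t'. always_honest honest i \<Longrightarrow> 4 * \<Delta> * t' \<ge> GAT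
          \<Longrightarrow> votes_in_slot \<Delta> cast i t' \<noteq> {}"
    and authentic:
      "\<And>i j r S T. always_honest honest i \<Longrightarrow> FFGVote i S T \<in> V j r
          \<Longrightarrow> \<exists>r' \<le> r. (S, T) \<in> cast i r'"
    and delivery_votes:
      "\<And>i j r r' S T. honest i r \<Longrightarrow> (S, T) \<in> cast i r \<Longrightarrow> j \<in> H honest active r'
          \<Longrightarrow> r' \<ge> max r GST + \<Delta> \<Longrightarrow> FFGVote i S T \<in> V j r'"
    and delivery_views:
      "\<And>i j r r'. honest i r \<Longrightarrow> j \<in> H honest active r'
          \<Longrightarrow> r' \<ge> max r GST + \<Delta> \<Longrightarrow> V i r \<subseteq> V j r'"
    and R1: "R1 \<Delta> honest V cast Vffg"
    and R2: "R2 \<Delta> GST GAT honest V cast Vffg fin txpool proposes"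
    and slot_late: "4 * \<Delta> * t \<ge> max GST GAT + 4 * \<Delta>"
    and p_honest: "honest p (4 * \<Delta> * t)"
    and p_proposes: "proposes p (4 * \<Delta> * t) chi_p"
  shows "\<forall>i \<in> H honest active (4 * \<Delta> * (t + 2) + 2 * \<Delta>).
           justified (V i (4 * \<Delta> * (t + 2) + 2 * \<Delta>)) (chi_p, t + 1) \<and>
           finalized (V i (4 * \<Delta> * (t + 2) + 2 * \<Delta>)) (chi_p, t + 1) \<and>
           chain_prefix chi_p (fin i (4 * \<Delta> * (t + 2) + 2 * \<Delta>)) \<and>
           (\<forall>tx \<in> txpool (4 * \<Delta> * t). tx_in_chain tx (fin i (4 * \<Delta> * (t + 2) + 2 * \<Delta>)))"
proof -
  define rs where "rs = 4 * \<Delta> * (t + 2) + 2 * \<Delta>"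
  have late: "max GST GAT + \<Delta> \<le> 4 * \<Delta> * t" using slot_late by simp
  note R2_at = R2[unfolded R2_def, rule_format, OF conjI[OF late conjI[OF p_honest p_proposes]]]
  have txs: "\<forall>tx \<in> txpool (4 * \<Delta> * t). tx_in_chain tx chi_p"
    using R2_at by (rule conjunct1)
  note final = R2_at[THEN conjunct2, THEN conjunct2, THEN conjunct2, THEN conjunct2,
      THEN conjunct2, folded rs_def, unfolded Let_def, rule_format]
  have few_corrupt: "3 * card {i. \<not> always_honest honest i} < card (UNIV :: 'v set)"
    using f_bound corrupt_bound n_def by linarith
  interpret ffg_execution \<Delta> GST honest active V cast Vffg
    by unfold_locales (fact Delta_pos few_corrupt vote_at_most_once authentic delivery_votes
        delivery_views R1)+
  interpret timely_proposal \<Delta> GST honest active V cast Vffg t chi_p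
    using R2 late p_honest p_proposes vote_after_GAT by (rule timely_proposal_if_R2)
  show ?thesis
    unfolding rs_def[symmetric]
  proof
    fix i assume i: "i \<in> H honest active rs"
    obtain C where C: "is_GF (V i rs) C"
      and fin: "\<And>chi. chain_prefix chi (fst C) \<Longrightarrow> chain_slot chi \<le> chain_slot chi_p
          \<Longrightarrow> chain_prefix chi (fin i rs)"
      and votes_seen: "\<And>j S T. always_honest honest j \<Longrightarrow>
          (S, T) \<in> votes_in_slot \<Delta> cast j (t + 2) \<Longrightarrow> FFGVote j S T \<in> V i rs"
      using final[of i] i unfolding H_def by (simp only: mem_Collect_eq) blast
    have "GST + \<Delta> \<le> rs" "4 * \<Delta> * (t + 2) + \<Delta> \<le> rs" "slot_of \<Delta> rs \<le> t + 2"
      using late unfolding rs_def slot_of_mid_slot[OF Delta_pos] by (simp_all add: algebra_simps)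
    note view = proposal_finalized_in_late_view[OF i this votes_seen C]
    from view(3) have "chain_prefix chi_p (fin i rs)"
      using fin by simp
    moreover have "\<forall>tx \<in> txpool (4 * \<Delta> * t). tx_in_chain tx (fin i rs)"
      using txs calculation by (auto intro: tx_in_chain_prefix)
    ultimately show "justified (V i rs) (chi_p, t + 1) \<and> finalized (V i rs) (chi_p, t + 1) \<and>
        chain_prefix chi_p (fin i rs) \<and> (\<forall>tx \<in> txpool (4 * \<Delta> * t). tx_in_chain tx (fin i rs))"
      using view(1,2) by (intro conjI)
  qed
qed

end
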